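(* For any group $H$, the set $\mathcal I_H=\{G\in\mathcal G:\ \overline G\cong H\}$ is either meager or comeager in $\mathcal G$.
   Context: Let $\mathbb N=\{1,2,3,\dots\}$. Equip $\mathbb N^{\mathbb N\times\mathbb N}$ with the product topology of the discrete topology on $\mathbb N$. Let $\mathcal G$ be the subspace consisting of those $A\in\mathbb N^{\mathbb N\times\mathbb N}$ that are the multiplication table of a group on the underlying set $\mathbb N$ whose identity element is $1$. For $G\in\mathcal G$, $\overline G$ denotes the group on $\mathbb N$ with multiplication table $G$. *)

theory Defs
  imports "HOL-Analysis.Analysis" "HOL-Algebra.Group"
begin

definition Npos :: "nat set" where
  "Npos = {n. 1 \<le> n}"

text \<open>N^(N x N) with the product of the discrete topologies on N.
  Points are extensional functions (undefined outside N x N).\<close>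
definition table_space :: "(nat \<times> nat \<Rightarrow> nat) topology" where
  "table_space = product_topology (\<lambda>_. discrete_topology Npos) (Npos \<times> Npos)"

definition group_of_table :: "(nat \<times> nat \<Rightarrow> nat) \<Rightarrow> nat monoid" where
  "group_of_table A = \<lparr>carrier = Npos, mult = (\<lambda>x y. A (x, y)), one = 1\<rparr>"

definition GG :: "(nat \<times> nat \<Rightarrow> nat) set" where
  "GG = {A \<in> topspace table_space. group (group_of_table A)}"

definition GG_space :: "(nat \<times> nat \<Rightarrow> nat) topology" where
  "GG_space = subtopology table_space GG"

definition nowhere_dense_in :: "'a topology \<Rightarrow> 'a set \<Rightarrow> bool" where
  "nowhere_dense_in X N \<longleftrightarrow> N \<subseteq> topspace X \<and> X interior_of (X closure_of N) = {}"

definition meager_in :: "'a topology \<Rightarrow> 'a set \<Rightarrow> bool" where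
  "meager_in X S \<longleftrightarrow> S \<subseteq> topspace X \<and>
     (\<exists>F. countable F \<and> (\<forall>N\<in>F. nowhere_dense_in X N) \<and> S \<subseteq> \<Union>F)"

definition comeager_in :: "'a topology \<Rightarrow> 'a set \<Rightarrow> bool" where
  "comeager_in X S \<longleftrightarrow> S \<subseteq> topspace X \<and> meager_in X (topspace X - S)"

end

theory Submission
  imports Defs "HOL-Combinatorics.Transposition"
begin

text \<open>
  Relabelling by permutations of \<open>N\<close> that fix \<open>1\<close> is an action on \<open>\<G>\<close> whose orbits are
  exactly the isomorphism classes. The action is topologically transitive: a basic open set around
  \<open>A1\<close> can be moved to meet one around \<open>A2\<close>, because a suitable coding of the direct product
  \<open>A1 \<times> A2\<close> on \<open>N\<close> agrees locally with both tables. Suppose the orbit of \<open>x\<close> is not meager.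
  Transitivity makes it dense near every point outside a nowhere dense set, and a Baire category
  argument shows that for every finite partial map \<open>p\<close> the relabellings of \<open>x\<close> by permutations
  extending \<open>p\<close> are dense near each of their own points. Hence outside countably many nowhere dense
  sets a table \<open>y\<close> admits a back-and-forth construction of a permutation \<open>g\<close> relabelling
  \<open>x\<close> into \<open>y\<close>, so the orbit is comeager.
\<close>

lemma bij_betw_Compl_fixpoint: "bij g \<Longrightarrow> g a = a \<Longrightarrow> bij_betw g (- {a}) (- {a})"
  using bij_betw_DiffI[of g UNIV UNIV "{a}" "{a}"] by (simp add: Compl_eq_Diff_UNIV)

lemma inj_on_extends_to_bij:
  fixes f :: "'a \<Rightarrow> 'a"
  assumes "finite D" "inj_on f D"
  shows "\<exists>g. bij g \<and> (\<forall>d\<in>D. g d = f d) \<and> (\<forall>x. x \<notin> D \<union> f ` D \<longrightarrow> g x = x)"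
  using assms
proof (induction D rule: finite_induct)
  case empty
  show ?case by (rule exI[of _ "\<lambda>x. x"]) (auto simp: bij_def)
next
  case (insert d D)
  then obtain g where g: "bij g" "\<forall>e\<in>D. g e = f e" "\<forall>x. x \<notin> D \<union> f ` D \<longrightarrow> g x = x"
    by auto
  have g_eq_iff: "g a = g b \<longleftrightarrow> a = b" for a b
    using g(1) by (auto simp: bij_def dest: injD)
  define g' where "g' = Transposition.transpose (f d) (g d) \<circ> g"
  have "bij g'"
    by (simp add: g'_def g(1) bij_comp)
  moreover have "g' e = f e" if "e \<in> insert d D" for e
  proof (cases "e = d")
    case False
    with that insert.prems insert.hyps(2) have "f e \<noteq> f d" "g e \<noteq> g d"
      by (auto simp: inj_on_def g_eq_iff)
    with False that g(2) show ?thesis by (simp add: g'_def transpose_apply_other)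
  qed (simp add: g'_def)
  moreover have "g' x = x" if "x \<notin> insert d D \<union> f ` insert d D" for x
  proof -
    have "g x = x" using that g(3) by auto
    moreover have "g d \<noteq> x" using that \<open>g x = x\<close> g_eq_iff[of d x] by auto
    ultimately show ?thesis using that by (simp add: g'_def transpose_apply_other)
  qed
  ultimately show ?case by blast
qed

definition locally_dense_at :: "'a topology \<Rightarrow> 'a set \<Rightarrow> 'a \<Rightarrow> bool" where
  "locally_dense_at X S y \<longleftrightarrow> y \<in> X interior_of (X closure_of S)"

lemma nowhere_dense_in_iff_locally_dense_at:
  "nowhere_dense_in X N \<longleftrightarrow> N \<subseteq> topspace X \<and> (\<forall>y. \<not> locally_dense_at X N y)"
  unfolding nowhere_dense_in_def locally_dense_at_def all_not_in_conv ..

lemma locally_dense_at_mono: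
  assumes "locally_dense_at X S y" "S \<subseteq> T"
  shows "locally_dense_at X T y"
  using assms(1) interior_of_mono[OF closure_of_mono[OF assms(2)]]
  unfolding locally_dense_at_def by blast

lemma locally_dense_at_imp_in_closure: "locally_dense_at X S y \<Longrightarrow> y \<in> X closure_of S"
  using interior_of_subset[of X "X closure_of S"] unfolding locally_dense_at_def by blast

text \<open>The points near which \<open>S\<close> is dense form an open set, so they cannot avoid a set \<open>N\<close>
  whose closure contains one of them.\<close>

lemma locally_dense_at_near_closure:
  assumes "locally_dense_at X S y" "y \<in> X closure_of N"
  shows "\<exists>z\<in>N. locally_dense_at X S z"
  using assms openin_interior_of[of X "X closure_of S"] unfolding locally_dense_at_def in_closure_of
  by blast

lemma locally_dense_at_homeomorphic_image:
  assumes "homeomorphic_map X Y f" "S \<subseteq> topspace X" "locally_dense_at X S y"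
  shows "locally_dense_at Y (f ` S) (f y)"
  using assms unfolding locally_dense_at_def
  by (simp add: homeomorphic_map_closure_of homeomorphic_map_interior_of closure_of_subset_topspace)

lemma meager_in_empty: "meager_in X {}"
  unfolding meager_in_def by (intro conjI exI[of _ "{}"]) auto

lemma locally_dense_at_imp_nonempty: "locally_dense_at X S y \<Longrightarrow> S \<noteq> {}"
  using locally_dense_at_imp_in_closure by fastforce

lemma not_meager_in_cover:
  assumes "S \<subseteq> topspace X" "\<not> meager_in X S" "countable \<F>" "S \<subseteq> \<Union>\<F>"
  shows "\<exists>N\<in>\<F>. \<not> nowhere_dense_in X N"
  using assms unfolding meager_in_def by blast

lemma not_meager_in_imp_locally_dense_at:
  assumes "S \<subseteq> topspace X" "\<not> meager_in X S"
  shows "\<exists>y. locally_dense_at X S y"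
  using not_meager_in_cover[OF assms, of "{S}"] assms(1)
  by (auto simp: nowhere_dense_in_iff_locally_dense_at)

type_synonym table = "nat \<times> nat \<Rightarrow> nat"

lemma Npos_eq_Compl: "Npos = - {0}"
  by (auto simp: Npos_def)

lemma Suc_in_Npos [simp]: "Suc n \<in> Npos" and zero_notin_Npos [simp]: "0 \<notin> Npos"
  by (simp_all add: Npos_def)

lemma one_in_Npos: "1 \<in> Npos"
  by simp

lemma topspace_table_space: "topspace table_space = (\<Pi>\<^sub>E ij\<in>Npos \<times> Npos. Npos)"
  by (simp add: table_space_def)

lemma table_eqI:
  assumes "A \<in> topspace table_space" "B \<in> topspace table_space"
    and "\<And>i j. i \<in> Npos \<Longrightarrow> j \<in> Npos \<Longrightarrow> A (i, j) = B (i, j)"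
  shows "A = B"
  using assms unfolding topspace_table_space by (intro PiE_ext) auto

lemma table_undefined: "A \<in> topspace table_space \<Longrightarrow> ij \<notin> Npos \<times> Npos \<Longrightarrow> A ij = undefined"
  unfolding topspace_table_space by (rule PiE_arb)

lemma GG_subset_topspace: "GG \<subseteq> topspace table_space"
  by (auto simp: GG_def)

lemma GG_undefined: "A \<in> GG \<Longrightarrow> ij \<notin> Npos \<times> Npos \<Longrightarrow> A ij = undefined"
  using GG_subset_topspace table_undefined by blast

lemma carrier_group_of_table [simp]: "carrier (group_of_table A) = Npos"
  and one_group_of_table [simp]: "\<one>\<^bsub>group_of_table A\<^esub> = 1"
  and mult_group_of_table [simp]: "x \<otimes>\<^bsub>group_of_table A\<^esub> y = A (x, y)"
  by (simp_all add: group_of_table_def)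

lemma group_of_table_GG: "A \<in> GG \<Longrightarrow> group (group_of_table A)"
  by (simp add: GG_def)

lemma GG_mult_closed: "A \<in> GG \<Longrightarrow> a \<in> Npos \<Longrightarrow> b \<in> Npos \<Longrightarrow> A (a, b) \<in> Npos"
  using group.subgroup_self[OF group_of_table_GG] subgroup.m_closed by fastforce

lemma GG_one_left: "A \<in> GG \<Longrightarrow> a \<in> Npos \<Longrightarrow> A (1, a) = a"
  using monoid.l_one[OF group.is_monoid[OF group_of_table_GG]] by fastforce

definition table_of :: "('a, 'b) monoid_scheme \<Rightarrow> ('a \<Rightarrow> nat) \<Rightarrow> table" where
  "table_of G \<phi> = (\<lambda>(i, j). if i \<in> Npos \<and> j \<in> Npos
     then \<phi> (inv_into (carrier G) \<phi> i \<otimes>\<^bsub>G\<^esub> inv_into (carrier G) \<phi> j) else undefined)"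

lemma table_of_apply:
  assumes "bij_betw \<phi> (carrier G) Npos" "a \<in> carrier G" "b \<in> carrier G"
  shows "table_of G \<phi> (\<phi> a, \<phi> b) = \<phi> (a \<otimes>\<^bsub>G\<^esub> b)"
  using assms by (auto simp: table_of_def bij_betw_def bij_betw_inv_into_left)

lemma table_of_in_topspace:
  assumes "group G" "bij_betw \<phi> (carrier G) Npos"
  shows "table_of G \<phi> \<in> topspace table_space"
  using assms bij_betw_inv_into[OF assms(2)]
  by (force simp: topspace_table_space table_of_def bij_betw_def extensional_def
      intro: group.subgroup_self subgroup.m_closed)

lemma table_of_iso:
  assumes "group G" "bij_betw \<phi> (carrier G) Npos" "\<phi> \<one>\<^bsub>G\<^esub> = 1"
  shows "\<phi> \<in> iso G (group_of_table (table_of G \<phi>))"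
  using assms by (auto simp: iso_def hom_def table_of_apply bij_betw_apply
      intro: group.subgroup_self subgroup.m_closed)

lemma table_of_GG:
  assumes "group G" "bij_betw \<phi> (carrier G) Npos" "\<phi> \<one>\<^bsub>G\<^esub> = 1"
  shows "table_of G \<phi> \<in> GG"
proof -
  have "group (group_of_table (table_of G \<phi>)\<lparr>one := 1\<rparr>)"
    using group.iso_imp_img_group[OF assms(1) table_of_iso[OF assms]] assms(3) by simp
  then show ?thesis
    using table_of_in_topspace[OF assms(1,2)] by (simp add: GG_def group_of_table_def)
qed

section \<open>Relabelling tables by permutations\<close>

text \<open>Permutations of \<open>N\<close> fixing the identity element \<open>1\<close>, extended to \<^typ>\<open>nat\<close> by \<open>g 0 = 0\<close>.\<close>

definition Sym1 :: "(nat \<Rightarrow> nat) set" where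
  "Sym1 = {g. bij g \<and> g 0 = 0 \<and> g 1 = 1}"

definition relabel :: "(nat \<Rightarrow> nat) \<Rightarrow> table \<Rightarrow> table" where
  "relabel g A = table_of (group_of_table A) g"

lemma Sym1_bij_betw_Npos: "g \<in> Sym1 \<Longrightarrow> bij_betw g Npos Npos"
  by (simp add: Sym1_def Npos_eq_Compl bij_betw_Compl_fixpoint)

lemma Sym1_eq_iff [simp]: "g \<in> Sym1 \<Longrightarrow> g a = g b \<longleftrightarrow> a = b"
  by (auto simp: Sym1_def bij_def dest: injD)

lemma Sym1_in_Npos_iff [simp]: "g \<in> Sym1 \<Longrightarrow> g n \<in> Npos \<longleftrightarrow> n \<in> Npos"
proof -
  assume g: "g \<in> Sym1"
  then have "g 0 = 0" by (simp add: Sym1_def)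
  then show ?thesis using Sym1_eq_iff[OF g, of n 0] by (simp add: Npos_eq_Compl)
qed

lemma Sym1_f_inv [simp]: "g \<in> Sym1 \<Longrightarrow> g (Hilbert_Choice.inv g n) = n"
  and Sym1_inv_f [simp]: "g \<in> Sym1 \<Longrightarrow> Hilbert_Choice.inv g (g n) = n"
  by (simp_all add: Sym1_def bij_is_inj bij_is_surj surj_f_inv_f)

lemma Sym1_inv: "g \<in> Sym1 \<Longrightarrow> Hilbert_Choice.inv g \<in> Sym1"
  using Sym1_inv_f[of g 0] Sym1_inv_f[of g 1] by (simp add: Sym1_def bij_imp_bij_inv)

lemma Sym1_comp: "g \<in> Sym1 \<Longrightarrow> h \<in> Sym1 \<Longrightarrow> g \<circ> h \<in> Sym1"
  by (auto simp: Sym1_def intro: bij_comp)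

lemma relabel_apply:
  "g \<in> Sym1 \<Longrightarrow> a \<in> Npos \<Longrightarrow> b \<in> Npos \<Longrightarrow> relabel g A (g a, g b) = g (A (a, b))"
  by (simp add: relabel_def table_of_apply Sym1_bij_betw_Npos)

lemma relabel_iso:
  "A \<in> GG \<Longrightarrow> g \<in> Sym1 \<Longrightarrow> g \<in> iso (group_of_table A) (group_of_table (relabel g A))"
  unfolding relabel_def
  by (rule table_of_iso) (auto simp: group_of_table_GG Sym1_bij_betw_Npos Sym1_def)

lemma relabel_GG: "A \<in> GG \<Longrightarrow> g \<in> Sym1 \<Longrightarrow> relabel g A \<in> GG"
  unfolding relabel_def
  by (rule table_of_GG) (auto simp: group_of_table_GG Sym1_bij_betw_Npos Sym1_def)

lemma relabel_eqI:
  assumes "A \<in> GG" "g \<in> Sym1" "B \<in> topspace table_space"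
    and "\<And>a b. a \<in> Npos \<Longrightarrow> b \<in> Npos \<Longrightarrow> B (g a, g b) = g (A (a, b))"
  shows "relabel g A = B"
proof (rule table_eqI)
  show "relabel g A \<in> topspace table_space"
    using relabel_GG[OF assms(1,2)] GG_subset_topspace by blast
  fix i j assume "i \<in> Npos" "j \<in> Npos"
  moreover define a b where "a = Hilbert_Choice.inv g i" and "b = Hilbert_Choice.inv g j"
  ultimately have "a \<in> Npos" "b \<in> Npos" "i = g a" "j = g b"
    using assms(2) Sym1_in_Npos_iff[OF Sym1_inv[OF assms(2)]] by auto
  then show "relabel g A (i, j) = B (i, j)"
    using assms(2,4) by (simp add: relabel_apply)
qed (fact assms(3))

lemma relabel_comp:
  assumes "A \<in> GG" "g \<in> Sym1" "h \<in> Sym1"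
  shows "relabel g (relabel h A) = relabel (g \<circ> h) A"
proof (rule relabel_eqI[OF assms(1) Sym1_comp[OF assms(2,3)], symmetric])
  show "relabel g (relabel h A) \<in> topspace table_space"
    using relabel_GG assms GG_subset_topspace by blast
  fix a b assume "a \<in> Npos" "b \<in> Npos"
  then show "relabel g (relabel h A) ((g \<circ> h) a, (g \<circ> h) b) = (g \<circ> h) (A (a, b))"
    using assms by (simp add: relabel_apply)
qed

lemma relabel_id: "A \<in> GG \<Longrightarrow> relabel id A = A"
  by (rule relabel_eqI) (auto simp: Sym1_def GG_subset_topspace[THEN subsetD])

lemma relabel_relabel_inv:
  assumes "A \<in> GG" "g \<in> Sym1"
  shows "relabel g (relabel (Hilbert_Choice.inv g) A) = A"
proof -
  have "g \<circ> Hilbert_Choice.inv g = id"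
    using assms(2) by (simp add: fun_eq_iff)
  then show ?thesis
    using relabel_comp[OF assms Sym1_inv[OF assms(2)]] relabel_id[OF assms(1)] by simp
qed

lemma relabel_inv_relabel:
  assumes "A \<in> GG" "g \<in> Sym1"
  shows "relabel (Hilbert_Choice.inv g) (relabel g A) = A"
proof -
  have "Hilbert_Choice.inv g \<circ> g = id"
    using assms(2) by (simp add: fun_eq_iff)
  then show ?thesis
    using relabel_comp[OF assms(1) Sym1_inv[OF assms(2)] assms(2)] relabel_id[OF assms(1)] by simp
qed

lemma iso_imp_relabel:
  assumes A: "A \<in> GG" and B: "B \<in> GG" and \<phi>: "\<phi> \<in> iso (group_of_table A) (group_of_table B)"
  shows "\<exists>g\<in>Sym1. relabel g A = B"
proof -
  define g where "g n = (if n \<in> Npos then \<phi> n else n)" for n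
  have "bij_betw \<phi> Npos Npos"
    using \<phi> by (simp add: iso_def)
  then have "bij_betw g Npos Npos"
    by (rule bij_betw_cong[THEN iffD1, rotated]) (simp add: g_def)
  moreover have "bij_betw g (- Npos) (- Npos)"
    by (auto simp: g_def Npos_eq_Compl)
  ultimately have "bij g"
    using bij_betw_combine[of g Npos Npos "- Npos" "- Npos"] by simp
  moreover have "\<phi> 1 = 1"
    using hom_one[of \<phi> "group_of_table A" "group_of_table B"] \<phi> A B
    by (simp add: iso_def group_of_table_GG)
  ultimately have g: "g \<in> Sym1"
    by (simp add: Sym1_def g_def Npos_eq_Compl)
  have "relabel g A = B"
  proof (rule relabel_eqI[OF A g])
    show "B \<in> topspace table_space" using B GG_subset_topspace by blast
    fix a b assume "a \<in> Npos" "b \<in> Npos"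
    then show "B (g a, g b) = g (A (a, b))"
      using \<phi> GG_mult_closed[OF A] by (auto simp: g_def iso_def hom_def)
  qed
  with g show ?thesis by blast
qed

definition cylinder :: "(nat \<times> nat) set \<Rightarrow> table \<Rightarrow> table set" where
  "cylinder F A = {B \<in> GG. \<forall>ij\<in>F. B ij = A ij}"

lemma topspace_GG_space [simp]: "topspace GG_space = GG"
  unfolding GG_space_def topspace_subtopology using GG_subset_topspace by blast

lemma cylinder_subset_GG: "cylinder F A \<subseteq> GG"
  by (auto simp: cylinder_def)

lemma self_in_cylinder: "A \<in> GG \<Longrightarrow> A \<in> cylinder F A"
  by (simp add: cylinder_def)

lemma openin_table_space_coordinate: "openin table_space {B \<in> topspace table_space. B ij = c}"
proof (cases "ij \<in> Npos \<times> Npos")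
  case True
  have "continuous_map table_space (discrete_topology Npos) (\<lambda>B. B ij)"
    unfolding table_space_def using True by (rule continuous_map_product_projection)
  then have "openin table_space {B \<in> topspace table_space. B ij \<in> {c} \<inter> Npos}"
    by (rule openin_continuous_map_preimage) simp
  moreover have "{B \<in> topspace table_space. B ij \<in> {c} \<inter> Npos} = {B \<in> topspace table_space. B ij = c}"
    using True PiE_mem by (fastforce simp: topspace_table_space)
  ultimately show ?thesis
    by simp
next
  case False
  then have "{B \<in> topspace table_space. B ij = c} = (if c = undefined then topspace table_space else {})"
    using table_undefined[OF _ False] by auto
  then show ?thesis by simp
qed

lemma openin_cylinder:
  assumes "finite F"
  shows "openin GG_space (cylinder F A)"
proof -
  have "openin table_space {B \<in> topspace table_space. \<forall>ij\<in>F. B ij = A ij}"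
    using assms
  proof (induction F rule: finite_induct)
    case (insert ij F)
    have "{B \<in> topspace table_space. \<forall>ij'\<in>insert ij F. B ij' = A ij'}
        = {B \<in> topspace table_space. \<forall>ij'\<in>F. B ij' = A ij'} \<inter> {B \<in> topspace table_space. B ij = A ij}"
      by auto
    then show ?case
      using openin_Int[OF insert.IH openin_table_space_coordinate] by simp
  qed simp
  then have "openin GG_space (GG \<inter> {B \<in> topspace table_space. \<forall>ij\<in>F. B ij = A ij})"
    unfolding GG_space_def by (rule openin_subtopology_Int2)
  moreover have "GG \<inter> {B \<in> topspace table_space. \<forall>ij\<in>F. B ij = A ij} = cylinder F A"
    using GG_subset_topspace by (auto simp: cylinder_def)
  ultimately show ?thesis by simp
qed

lemma openin_GG_space_cylinder:
  assumes "openin GG_space U" "A \<in> U"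
  obtains F where "finite F" "cylinder F A \<subseteq> U"
proof -
  obtain T where T: "openin table_space T" "U = T \<inter> GG"
    using assms(1) by (auto simp: GG_space_def openin_subtopology)
  then obtain V where V: "finite {ij \<in> Npos \<times> Npos. V ij \<noteq> Npos}"
      "A \<in> Pi\<^sub>E (Npos \<times> Npos) V" "Pi\<^sub>E (Npos \<times> Npos) V \<subseteq> T"
    using assms(2) unfolding table_space_def openin_product_topology_alt by fastforce
  let ?F = "{ij \<in> Npos \<times> Npos. V ij \<noteq> Npos}"
  have "B \<in> U" if B: "B \<in> cylinder ?F A" for B
  proof -
    have "B \<in> topspace table_space"
      using B cylinder_subset_GG GG_subset_topspace by blast
    have "B ij \<in> V ij" if ij: "ij \<in> Npos \<times> Npos" for ij
    proof (cases "V ij = Npos")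
      case True
      then show ?thesis
        using PiE_mem[OF \<open>B \<in> topspace table_space\<close>[unfolded topspace_table_space] ij] by simp
    next
      case False
      then have "B ij = A ij" using B ij by (auto simp: cylinder_def)
      then show ?thesis using PiE_mem[OF V(2) ij] by simp
    qed
    then have "B \<in> Pi\<^sub>E (Npos \<times> Npos) V"
      using \<open>B \<in> topspace table_space\<close> by (auto simp: topspace_table_space PiE_iff)
    then show "B \<in> U"
      using V(3) B T(2) by (auto simp: cylinder_def)
  qed
  with V(1) that show ?thesis by blast
qed

lemma continuous_map_relabel:
  assumes "g \<in> Sym1"
  shows "continuous_map GG_space GG_space (relabel g)"
proof -
  have coordinate: "continuous_map GG_space (discrete_topology Npos) (\<lambda>B. relabel g B (i, j))"
    if "i \<in> Npos" "j \<in> Npos" for i j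
  proof (rule continuous_map_eq)
    let ?ij' = "(Hilbert_Choice.inv g i, Hilbert_Choice.inv g j)"
    have "?ij' \<in> Npos \<times> Npos"
      using that Sym1_in_Npos_iff[OF Sym1_inv[OF assms]] by auto
    then have "continuous_map GG_space (discrete_topology Npos) (\<lambda>B. B ?ij')"
      unfolding GG_space_def table_space_def
      by (intro continuous_map_from_subtopology continuous_map_product_projection)
    then show "continuous_map GG_space (discrete_topology Npos) (g \<circ> (\<lambda>B. B ?ij'))"
      by (rule continuous_map_compose) (use assms in auto)
    show "(g \<circ> (\<lambda>B. B ?ij')) B = relabel g B (i, j)" if "B \<in> topspace GG_space" for B
      using relabel_apply[OF assms, of "Hilbert_Choice.inv g i" "Hilbert_Choice.inv g j" B]
        \<open>?ij' \<in> Npos \<times> Npos\<close> assms by simp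
  qed
  have into_GG: "relabel g ` GG \<subseteq> GG"
    using relabel_GG[OF _ assms] by auto
  then have "relabel g ` GG \<subseteq> extensional (Npos \<times> Npos)"
    using GG_subset_topspace by (force simp: topspace_table_space PiE_iff)
  with coordinate have "continuous_map GG_space table_space (relabel g)"
    unfolding table_space_def continuous_map_componentwise by auto
  with into_GG have "continuous_map GG_space (subtopology table_space GG) (relabel g)"
    unfolding continuous_map_in_subtopology by (simp add: image_subset_iff_funcset)
  then show ?thesis
    by (simp only: GG_space_def)
qed

lemma homeomorphic_map_relabel:
  assumes "g \<in> Sym1"
  shows "homeomorphic_map GG_space GG_space (relabel g)"
  unfolding homeomorphic_map_maps homeomorphic_maps_def
proof (intro exI conjI ballI)
  show "continuous_map GG_space GG_space (relabel g)"
    "continuous_map GG_space GG_space (relabel (Hilbert_Choice.inv g))"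
    using assms Sym1_inv by (auto intro: continuous_map_relabel)
  fix A assume "A \<in> topspace GG_space"
  then show "relabel (Hilbert_Choice.inv g) (relabel g A) = A"
    and "relabel g (relabel (Hilbert_Choice.inv g) A) = A"
    using relabel_inv_relabel relabel_relabel_inv assms by auto
qed

section \<open>Topological transitivity of relabelling\<close>

lemma infinite_Npos: "infinite Npos"
  by (simp add: Npos_eq_Compl)

lemma inj_on_extends_to_bij_fixing_0:
  assumes "finite D" "D \<subseteq> Npos" "inj_on f D" "f ` D \<subseteq> Npos"
  obtains \<sigma> where "bij \<sigma>" "\<sigma> 0 = 0" "\<And>d. d \<in> D \<Longrightarrow> \<sigma> d = f d"
proof -
  obtain \<sigma> where \<sigma>: "bij \<sigma>" "\<forall>d\<in>D. \<sigma> d = f d"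
    and \<sigma>_fix: "\<forall>x. x \<notin> D \<union> f ` D \<longrightarrow> \<sigma> x = x"
    using inj_on_extends_to_bij[OF assms(1,3)] by blast
  have "0 \<notin> D \<union> f ` D"
    using assms(2,4) zero_notin_Npos by blast
  with \<sigma>_fix have "\<sigma> 0 = 0" by blast
  with \<sigma> that show ?thesis by blast
qed

lemma inj_on_pair_fst: "inj_on \<phi> (A \<times> B) \<Longrightarrow> b \<in> B \<Longrightarrow> inj_on (\<lambda>a. \<phi> (a, b)) A"
  and inj_on_pair_snd: "inj_on \<phi> (A \<times> B) \<Longrightarrow> a \<in> A \<Longrightarrow> inj_on (\<lambda>b. \<phi> (a, b)) B"
  by (auto simp: inj_on_def)

lemma ex_pairing_Npos:
  assumes "finite E" "E \<subseteq> Npos"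
  shows "\<exists>\<phi>. bij_betw \<phi> (Npos \<times> Npos) Npos \<and> (\<forall>a\<in>E. \<phi> (a, 1) = a)"
proof -
  obtain e1 :: "nat \<Rightarrow> nat" where e1: "bij_betw e1 UNIV Npos"
    using countable_infiniteE'[OF countableI_type infinite_Npos] by blast
  obtain e2 :: "nat \<Rightarrow> nat \<times> nat" where e2: "bij_betw e2 UNIV (Npos \<times> Npos)"
  proof (rule countable_infiniteE'[OF countableI_type])
    show "infinite (Npos \<times> Npos)"
      using infinite_Npos one_in_Npos by (auto simp: finite_cartesian_product_iff)
  qed
  define \<phi>0 where "\<phi>0 = e1 \<circ> inv_into UNIV e2"
  have \<phi>0: "bij_betw \<phi>0 (Npos \<times> Npos) Npos"
    unfolding \<phi>0_def by (rule bij_betw_trans[OF bij_betw_inv_into[OF e2] e1])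
  have "inj_on (\<lambda>a. \<phi>0 (a, 1)) E"
    using inj_on_pair_fst[OF bij_betw_imp_inj_on[OF \<phi>0] one_in_Npos] assms(2) by (rule inj_on_subset)
  moreover have "(\<lambda>a. \<phi>0 (a, 1)) ` E \<subseteq> Npos"
    using assms(2) bij_betw_apply[OF \<phi>0] by auto
  ultimately obtain \<sigma> where \<sigma>: "bij \<sigma>" "\<sigma> 0 = 0" "\<And>a. a \<in> E \<Longrightarrow> \<sigma> a = \<phi>0 (a, 1)"
    using inj_on_extends_to_bij_fixing_0[OF assms] by blast
  have "Hilbert_Choice.inv \<sigma> 0 = 0"
    by (metis \<sigma>(1,2) bij_is_inj inv_f_f)
  then have "bij_betw (Hilbert_Choice.inv \<sigma>) Npos Npos"
    unfolding Npos_eq_Compl by (rule bij_betw_Compl_fixpoint[OF bij_imp_bij_inv[OF \<sigma>(1)]])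
  then have "bij_betw (Hilbert_Choice.inv \<sigma> \<circ> \<phi>0) (Npos \<times> Npos) Npos"
    using \<phi>0 by (rule bij_betw_trans[rotated])
  moreover have "(Hilbert_Choice.inv \<sigma> \<circ> \<phi>0) (a, 1) = a" if "a \<in> E" for a
  proof -
    have "\<phi>0 (a, 1) = \<sigma> a" using \<sigma>(3) that by simp
    then show ?thesis using bij_is_inj[OF \<sigma>(1)] by simp
  qed
  ultimately show ?thesis by blast
qed

lemma GG_finite_support:
  assumes "A \<in> GG" "finite F"
  obtains E where "finite E" "E \<subseteq> Npos" "1 \<in> E"
    "\<And>i j. (i, j) \<in> F \<Longrightarrow> i \<in> Npos \<Longrightarrow> j \<in> Npos \<Longrightarrow> i \<in> E \<and> j \<in> E \<and> A (i, j) \<in> E"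
proof
  let ?E = "(fst ` F \<union> snd ` F \<union> A ` F \<union> {1}) \<inter> Npos"
  show "finite ?E" "?E \<subseteq> Npos" "1 \<in> ?E"
    using assms(2) by auto
  fix i j assume "(i, j) \<in> F" "i \<in> Npos" "j \<in> Npos"
  then show "i \<in> ?E \<and> j \<in> ?E \<and> A (i, j) \<in> ?E"
    using GG_mult_closed[OF assms(1)] by (force simp: image_iff)
qed

lemma direct_product_table:
  assumes "A1 \<in> GG" "A2 \<in> GG" "bij_betw \<phi> (Npos \<times> Npos) Npos" "\<phi> (1, 1) = 1"
  obtains B where "B \<in> GG" "\<And>a b c d. a \<in> Npos \<Longrightarrow> b \<in> Npos \<Longrightarrow> c \<in> Npos \<Longrightarrow> d \<in> Npos \<Longrightarrow>
      B (\<phi> (a, b), \<phi> (c, d)) = \<phi> (A1 (a, c), A2 (b, d))"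
proof
  let ?G = "group_of_table A1 \<times>\<times> group_of_table A2"
  have G: "group ?G" "carrier ?G = Npos \<times> Npos" "\<one>\<^bsub>?G\<^esub> = (1, 1)"
    using assms(1,2) by (simp_all add: DirProd_group group_of_table_GG)
  show "table_of ?G \<phi> \<in> GG"
    using assms(3,4) G by (intro table_of_GG) simp_all
  fix a b c d assume "a \<in> Npos" "b \<in> Npos" "c \<in> Npos" "d \<in> Npos"
  then show "table_of ?G \<phi> (\<phi> (a, b), \<phi> (c, d)) = \<phi> (A1 (a, c), A2 (b, d))"
    using table_of_apply[of \<phi> ?G "(a, b)" "(c, d)"] assms(3) G(2) by simp
qed

lemma ex_Sym1_inverting_pairing:
  assumes "bij_betw \<phi> (Npos \<times> Npos) Npos" "\<phi> (1, 1) = 1" "finite E" "E \<subseteq> Npos" "1 \<in> E"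
  shows "\<exists>\<pi>\<in>Sym1. \<forall>b\<in>E. \<pi> (\<phi> (1, b)) = b"
proof -
  have "inj_on (\<lambda>b. \<phi> (1, b)) E"
    using inj_on_pair_snd[OF bij_betw_imp_inj_on[OF assms(1)] one_in_Npos] assms(4) by (rule inj_on_subset)
  moreover have "(\<lambda>b. \<phi> (1, b)) ` E \<subseteq> Npos"
    using assms(4) bij_betw_apply[OF assms(1)] by auto
  ultimately obtain \<sigma> where \<sigma>: "bij \<sigma>" "\<sigma> 0 = 0" "\<And>b. b \<in> E \<Longrightarrow> \<sigma> b = \<phi> (1, b)"
    using inj_on_extends_to_bij_fixing_0[OF assms(3,4)] by blast
  then have \<sigma>_Sym1: "\<sigma> \<in> Sym1"
    using assms(2,5) by (simp add: Sym1_def)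
  have "Hilbert_Choice.inv \<sigma> (\<phi> (1, b)) = b" if "b \<in> E" for b
    using \<sigma>(3)[OF that] Sym1_inv_f[OF \<sigma>_Sym1, of b] by simp
  then show ?thesis
    using Sym1_inv[OF \<sigma>_Sym1] by blast
qed

text \<open>The witness is the direct product \<open>A1 \<times> A2\<close>, coded along a pairing \<open>\<phi>\<close> that is the
  identity on the elements \<open>(a, 1)\<close> mentioned by \<open>F1\<close>: it agrees with \<open>A1\<close> on \<open>F1\<close>, and after
  the relabelling \<open>\<phi> (1, b) \<mapsto> b\<close> it agrees with \<open>A2\<close> on \<open>F2\<close>.\<close>

lemma relabel_cylinders_meet:
  assumes A1: "A1 \<in> GG" and A2: "A2 \<in> GG" and "finite F1" "finite F2"
  shows "\<exists>\<pi>\<in>Sym1. \<exists>B\<in>cylinder F1 A1. relabel \<pi> B \<in> cylinder F2 A2"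
proof -
  obtain E1 where E1: "finite E1" "E1 \<subseteq> Npos" "1 \<in> E1"
    "\<And>i j. (i, j) \<in> F1 \<Longrightarrow> i \<in> Npos \<Longrightarrow> j \<in> Npos \<Longrightarrow> i \<in> E1 \<and> j \<in> E1 \<and> A1 (i, j) \<in> E1"
    using GG_finite_support[OF A1 \<open>finite F1\<close>] by blast
  obtain E2 where E2: "finite E2" "E2 \<subseteq> Npos" "1 \<in> E2"
    "\<And>i j. (i, j) \<in> F2 \<Longrightarrow> i \<in> Npos \<Longrightarrow> j \<in> Npos \<Longrightarrow> i \<in> E2 \<and> j \<in> E2 \<and> A2 (i, j) \<in> E2"
    using GG_finite_support[OF A2 \<open>finite F2\<close>] by blast
  obtain \<phi> where \<phi>: "bij_betw \<phi> (Npos \<times> Npos) Npos" "\<forall>a\<in>E1. \<phi> (a, 1) = a"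
    using ex_pairing_Npos[OF E1(1,2)] by blast
  have \<phi>1: "\<phi> (1, 1) = 1"
    using \<phi>(2) E1(3) by blast
  obtain B where B: "B \<in> GG" "\<And>a b c d. a \<in> Npos \<Longrightarrow> b \<in> Npos \<Longrightarrow> c \<in> Npos \<Longrightarrow> d \<in> Npos \<Longrightarrow>
      B (\<phi> (a, b), \<phi> (c, d)) = \<phi> (A1 (a, c), A2 (b, d))"
    using direct_product_table[OF A1 A2 \<phi>(1) \<phi>1] by blast
  obtain \<pi> where \<pi>: "\<pi> \<in> Sym1" "\<forall>b\<in>E2. \<pi> (\<phi> (1, b)) = b"
    using ex_Sym1_inverting_pairing[OF \<phi>(1) \<phi>1 E2(1-3)] by blast
  have "B (i, j) = A1 (i, j)" if "(i, j) \<in> F1" for i j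
  proof (cases "i \<in> Npos \<and> j \<in> Npos")
    case True
    with that E1(4) \<phi>(2) have "B (i, j) = B (\<phi> (i, 1), \<phi> (j, 1))" "\<phi> (A1 (i, j), 1) = A1 (i, j)"
      by auto
    then show ?thesis
      using B(2) True GG_one_left[OF A2] by (simp add: one_in_Npos)
  qed (simp add: GG_undefined B(1) A1)
  then have "B \<in> cylinder F1 A1"
    using B(1) by (auto simp: cylinder_def)
  moreover have "relabel \<pi> B (b, d) = A2 (b, d)" if "(b, d) \<in> F2" for b d
  proof (cases "b \<in> Npos \<and> d \<in> Npos")
    case True
    with that E2(4) \<pi>(2) have bd: "(b, d) = (\<pi> (\<phi> (1, b)), \<pi> (\<phi> (1, d)))"
      and A2_bd: "\<pi> (\<phi> (1, A2 (b, d))) = A2 (b, d)"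
      by auto
    have "relabel \<pi> B (b, d) = \<pi> (B (\<phi> (1, b), \<phi> (1, d)))"
      unfolding bd by (rule relabel_apply[OF \<pi>(1)]) (use True bij_betw_apply[OF \<phi>(1)] in auto)
    also have "\<dots> = \<pi> (\<phi> (1, A2 (b, d)))"
      using B(2) True GG_one_left[OF A1] by (simp add: one_in_Npos)
    finally show ?thesis
      using A2_bd by simp
  qed (simp add: GG_undefined relabel_GG[OF B(1) \<pi>(1)] A2)
  then have "relabel \<pi> B \<in> cylinder F2 A2"
    using relabel_GG[OF B(1) \<pi>(1)] by (auto simp: cylinder_def)
  ultimately show ?thesis
    using \<pi>(1) by blast
qed

lemma relabel_topologically_transitive:
  assumes "openin GG_space U" "openin GG_space V" "U \<noteq> {}" "V \<noteq> {}"
  shows "\<exists>\<pi>\<in>Sym1. \<exists>B\<in>U. relabel \<pi> B \<in> V"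
proof -
  obtain A1 A2 where A: "A1 \<in> U" "A2 \<in> V"
    using assms(3,4) by blast
  obtain F1 where F1: "finite F1" "cylinder F1 A1 \<subseteq> U"
    using openin_GG_space_cylinder[OF assms(1) A(1)] by blast
  obtain F2 where F2: "finite F2" "cylinder F2 A2 \<subseteq> V"
    using openin_GG_space_cylinder[OF assms(2) A(2)] by blast
  have "A1 \<in> GG" "A2 \<in> GG"
    using A openin_subset[OF assms(1)] openin_subset[OF assms(2)] by auto
  then show ?thesis
    using relabel_cylinders_meet[OF _ _ F1(1) F2(1)] F1(2) F2(2) by blast
qed

section \<open>Orbits restricted by finite partial maps\<close>

text \<open>Finite partial maps on \<open>N\<close> are lists of pairs, so that there are only countably many.\<close>

definition Sym1_ext :: "(nat \<times> nat) list \<Rightarrow> (nat \<Rightarrow> nat) set" where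
  "Sym1_ext p = {g \<in> Sym1. \<forall>(a, b) \<in> set p. g a = b}"

definition restricted_orbit :: "(nat \<times> nat) list \<Rightarrow> table \<Rightarrow> table set" where
  "restricted_orbit p x = (\<lambda>g. relabel g x) ` Sym1_ext p"

lemma Sym1_ext_Nil [simp]: "Sym1_ext [] = Sym1"
  by (simp add: Sym1_ext_def)

lemma Sym1_ext_imp_Sym1: "g \<in> Sym1_ext p \<Longrightarrow> g \<in> Sym1"
  by (simp add: Sym1_ext_def)

lemma restricted_orbit_subset_GG: "x \<in> GG \<Longrightarrow> restricted_orbit p x \<subseteq> GG"
  by (auto simp: restricted_orbit_def Sym1_ext_def relabel_GG)

lemma relabel_orbit_subset:
  assumes "\<pi> \<in> Sym1" "x \<in> GG"
  shows "relabel \<pi> ` restricted_orbit [] x \<subseteq> restricted_orbit [] x"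
  using assms by (auto simp: restricted_orbit_def relabel_comp Sym1_comp)

lemma relabel_restricted_orbit_subset:
  assumes "x \<in> GG" "h \<in> Sym1_ext p" "k \<in> Sym1_ext q" "map fst q = map fst p"
  shows "relabel (h \<circ> Hilbert_Choice.inv k) ` restricted_orbit q x \<subseteq> restricted_orbit p x"
proof
  have h: "h \<in> Sym1" and k: "k \<in> Sym1"
    using assms(2,3) by (simp_all add: Sym1_ext_def)
  fix z assume "z \<in> relabel (h \<circ> Hilbert_Choice.inv k) ` restricted_orbit q x"
  then obtain g where g: "g \<in> Sym1_ext q" "z = relabel (h \<circ> Hilbert_Choice.inv k) (relabel g x)"
    by (auto simp: restricted_orbit_def)
  have "(h \<circ> Hilbert_Choice.inv k) (g a) = b" if "(a, b) \<in> set p" for a b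
  proof -
    have "a \<in> fst ` set q"
      using that assms(4) by (metis fst_conv image_eqI list.set_map)
    then obtain c where "(a, c) \<in> set q" by force
    then have "g a = k a"
      using g(1) assms(3) by (auto simp: Sym1_ext_def)
    then show ?thesis
      using that assms(2) k by (auto simp: Sym1_ext_def)
  qed
  then have "(h \<circ> Hilbert_Choice.inv k) \<circ> g \<in> Sym1_ext p"
    using g(1) h k by (auto simp: Sym1_ext_def intro!: Sym1_comp Sym1_inv)
  moreover have "z = relabel ((h \<circ> Hilbert_Choice.inv k) \<circ> g) x"
    using g assms(1) h k by (simp add: relabel_comp Sym1_comp Sym1_inv Sym1_ext_def)
  ultimately show "z \<in> restricted_orbit p x"
    by (auto simp: restricted_orbit_def)
qed

lemma locally_dense_at_relabel:
  assumes "g \<in> Sym1" "S \<subseteq> GG" "locally_dense_at GG_space S y"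
  shows "locally_dense_at GG_space (relabel g ` S) (relabel g y)"
  using locally_dense_at_homeomorphic_image[OF homeomorphic_map_relabel[OF assms(1)]] assms(2,3)
  by simp

lemma restricted_orbit_closure_apply:
  assumes "y \<in> GG" "y \<in> GG_space closure_of restricted_orbit p x"
    and "(a, b) \<in> set p" "(c, d) \<in> set p" "(x (a, c), e) \<in> set p" "a \<in> Npos" "c \<in> Npos"
  shows "y (b, d) = e"
proof -
  obtain z where z: "z \<in> restricted_orbit p x" "z \<in> cylinder {(b, d)} y"
    using assms(2) openin_cylinder[of "{(b, d)}" y] self_in_cylinder[OF assms(1)]
    unfolding in_closure_of by blast
  then obtain h where h: "h \<in> Sym1_ext p" "z = relabel h x"
    by (auto simp: restricted_orbit_def)
  then have "h a = b" "h c = d" "h (x (a, c)) = e"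
    using assms(3-5) by (auto simp: Sym1_ext_def)
  then have "z (b, d) = e"
    using h relabel_apply[OF Sym1_ext_imp_Sym1[OF h(1)] assms(6,7)] by metis
  then show ?thesis
    using z(2) by (simp add: cylinder_def)
qed

text \<open>Baire category argument: the orbit is the countable union of the restricted orbits
  \<open>restricted_orbit (q k) x\<close>, where \<open>q k\<close> records the values of \<open>k\<close> on the domain of \<open>p\<close>; one
  of them is somewhere dense, and a relabelling moves that region to \<open>relabel h x\<close>.\<close>

lemma locally_dense_at_restricted_orbit:
  assumes x: "x \<in> GG" and orbit: "\<not> meager_in GG_space (restricted_orbit [] x)"
    and h: "h \<in> Sym1_ext p"
  shows "locally_dense_at GG_space (restricted_orbit p x) (relabel h x)"
proof -
  define q where "q k = map (\<lambda>(a, _). (a, k a)) p" for k :: "nat \<Rightarrow> nat"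
  have "(\<lambda>k. restricted_orbit (q k) x) ` Sym1 \<subseteq> range (\<lambda>q. restricted_orbit q x)"
    by auto
  then have "countable ((\<lambda>k. restricted_orbit (q k) x) ` Sym1)"
    by (rule countable_subset) simp
  moreover have "restricted_orbit [] x \<subseteq> (\<Union>k\<in>Sym1. restricted_orbit (q k) x)"
    by (force simp: restricted_orbit_def Sym1_ext_def q_def)
  ultimately obtain k where "k \<in> Sym1" "\<not> nowhere_dense_in GG_space (restricted_orbit (q k) x)"
    using not_meager_in_cover[OF _ orbit] restricted_orbit_subset_GG[OF x] by force
  then obtain z0 where dense_z0: "locally_dense_at GG_space (restricted_orbit (q k) x) z0"
    using restricted_orbit_subset_GG[OF x] unfolding nowhere_dense_in_iff_locally_dense_at by auto
  obtain z where z: "z \<in> restricted_orbit (q k) x"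
    and dense_z: "locally_dense_at GG_space (restricted_orbit (q k) x) z"
    using locally_dense_at_near_closure[OF dense_z0 locally_dense_at_imp_in_closure[OF dense_z0]]
    by blast
  then obtain k' where k': "k' \<in> Sym1_ext (q k)" "z = relabel k' x"
    by (auto simp: restricted_orbit_def)
  define \<pi> where "\<pi> = h \<circ> Hilbert_Choice.inv k'"
  have \<pi>: "\<pi> \<in> Sym1"
    unfolding \<pi>_def using h k' by (auto intro: Sym1_comp Sym1_inv Sym1_ext_imp_Sym1)
  have "relabel \<pi> z = relabel h x"
    using k' h x \<pi> by (simp add: \<pi>_def relabel_comp Sym1_ext_imp_Sym1 comp_assoc o_def)
  moreover have "locally_dense_at GG_space (relabel \<pi> ` restricted_orbit (q k) x) (relabel \<pi> z)"
    using locally_dense_at_relabel[OF \<pi> restricted_orbit_subset_GG[OF x] dense_z] .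
  moreover have "relabel \<pi> ` restricted_orbit (q k) x \<subseteq> restricted_orbit p x"
    unfolding \<pi>_def
    by (rule relabel_restricted_orbit_subset[OF x h k'(1)]) (simp add: q_def case_prod_unfold)
  ultimately show ?thesis
    using locally_dense_at_mono by simp
qed

lemma Sym1_ext_chain_limit:
  assumes mono: "\<And>n. set (ch n) \<subseteq> set (ch (Suc n))"
    and consistent: "\<And>n. Sym1_ext (ch n) \<noteq> {}"
    and total: "\<And>a. \<exists>n b. (a, b) \<in> set (ch n)" and onto: "\<And>b. \<exists>n a. (a, b) \<in> set (ch n)"
  obtains g where "\<And>n. g \<in> Sym1_ext (ch n)"
proof -
  let ?R = "\<Union>n. set (ch n)"
  have realized: "\<exists>h\<in>Sym1. h a = b \<and> h a' = b'"
    if pairs: "(a, b) \<in> ?R" "(a', b') \<in> ?R" for a b a' b'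
  proof -
    obtain n n' where "(a, b) \<in> set (ch n)" "(a', b') \<in> set (ch n')"
      using pairs by blast
    then have "(a, b) \<in> set (ch (max n n'))" "(a', b') \<in> set (ch (max n n'))"
      using lift_Suc_mono_le[of "\<lambda>n. set (ch n)", OF mono] by (meson max.cobounded1 max.cobounded2 subsetD)+
    moreover obtain h where "h \<in> Sym1_ext (ch (max n n'))"
      using consistent by blast
    ultimately show ?thesis
      by (auto simp: Sym1_ext_def)
  qed
  define g where "g a = (SOME b. (a, b) \<in> ?R)" for a
  have g_in_R: "(a, g a) \<in> ?R" for a
  proof -
    have "\<exists>b. (a, b) \<in> ?R"
      using total[of a] by blast
    then show ?thesis
      unfolding g_def by (rule someI_ex)
  qed
  have g_eq: "g a = b" if "(a, b) \<in> ?R" for a b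
    using realized[OF that g_in_R[of a]] by auto
  have "inj g"
  proof (rule injI)
    fix a a' assume "g a = g a'"
    then show "a = a'"
      using realized[OF g_in_R[of a] g_in_R[of a']] by (metis Sym1_eq_iff)
  qed
  moreover have "surj g"
    using onto g_eq by (metis UN_I UNIV_I surjI)
  moreover have "g c = c" if "c = 0 \<or> c = 1" for c
    using realized[OF g_in_R[of c] g_in_R[of c]] that by (auto simp: Sym1_def)
  ultimately have "g \<in> Sym1"
    by (simp add: Sym1_def bij_def)
  with g_eq have "g \<in> Sym1_ext (ch n)" for n
    by (auto simp: Sym1_ext_def)
  then show ?thesis using that by blast
qed

section \<open>A non-meager orbit is comeager\<close>

definition step_extensions :: "(nat \<times> nat) list \<Rightarrow> nat \<Rightarrow> bool \<Rightarrow> (nat \<times> nat) list set" where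
  "step_extensions p k forth = (if forth then {(k, v) # p | v. True} else {(u, k) # p | u. True})"

definition far_from_orbit :: "table \<Rightarrow> table set" where
  "far_from_orbit x = {y \<in> GG. \<not> locally_dense_at GG_space (restricted_orbit [] x) y}"

definition stuck_at :: "table \<Rightarrow> (nat \<times> nat) list \<Rightarrow> nat \<Rightarrow> bool \<Rightarrow> table set" where
  "stuck_at x p k forth = {y \<in> GG. locally_dense_at GG_space (restricted_orbit p x) y \<and>
     (\<forall>p'\<in>step_extensions p k forth. \<not> locally_dense_at GG_space (restricted_orbit p' x) y)}"

lemma nowhere_dense_far_from_orbit:
  assumes x: "x \<in> GG" and orbit: "\<not> meager_in GG_space (restricted_orbit [] x)"
  shows "nowhere_dense_in GG_space (far_from_orbit x)"
  unfolding nowhere_dense_in_iff_locally_dense_at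
proof (intro conjI allI notI)
  show "far_from_orbit x \<subseteq> topspace GG_space"
    by (auto simp: far_from_orbit_def)
  let ?O = "restricted_orbit [] x"
  fix y assume "locally_dense_at GG_space (far_from_orbit x) y"
  moreover obtain z where "locally_dense_at GG_space ?O z"
    using not_meager_in_imp_locally_dense_at[OF _ orbit] restricted_orbit_subset_GG[OF x] by auto
  ultimately have "\<exists>\<pi>\<in>Sym1. \<exists>B\<in>GG_space interior_of (GG_space closure_of ?O).
      relabel \<pi> B \<in> GG_space interior_of (GG_space closure_of far_from_orbit x)"
    by (intro relabel_topologically_transitive openin_interior_of) (auto simp: locally_dense_at_def)
  then obtain \<pi> B where \<pi>: "\<pi> \<in> Sym1"
    and B: "locally_dense_at GG_space ?O B"
    and \<pi>B: "locally_dense_at GG_space (far_from_orbit x) (relabel \<pi> B)"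
    unfolding locally_dense_at_def by blast
  have "locally_dense_at GG_space (relabel \<pi> ` ?O) (relabel \<pi> B)"
    by (rule locally_dense_at_relabel[OF \<pi> restricted_orbit_subset_GG[OF x] B])
  then have "locally_dense_at GG_space ?O (relabel \<pi> B)"
    by (rule locally_dense_at_mono[OF _ relabel_orbit_subset[OF \<pi> x]])
  then obtain y' where "y' \<in> far_from_orbit x" "locally_dense_at GG_space ?O y'"
    using locally_dense_at_near_closure[OF _ locally_dense_at_imp_in_closure[OF \<pi>B]] by blast
  then show False
    by (simp add: far_from_orbit_def)
qed

lemma nowhere_dense_stuck_at:
  assumes x: "x \<in> GG" and orbit: "\<not> meager_in GG_space (restricted_orbit [] x)"
  shows "nowhere_dense_in GG_space (stuck_at x p k forth)"
  unfolding nowhere_dense_in_iff_locally_dense_at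
proof (intro conjI allI notI)
  let ?N = "stuck_at x p k forth"
  let ?U = "GG_space interior_of (GG_space closure_of ?N)"
  show "?N \<subseteq> topspace GG_space"
    by (auto simp: stuck_at_def)
  fix y assume "locally_dense_at GG_space ?N y"
  then have "y \<in> ?U" "y \<in> GG_space closure_of ?N"
    using locally_dense_at_imp_in_closure by (auto simp: locally_dense_at_def)
  then obtain y1 where "y1 \<in> ?N" "y1 \<in> ?U"
    unfolding in_closure_of by (meson openin_interior_of)
  then have "y1 \<in> GG_space closure_of restricted_orbit p x"
    using locally_dense_at_imp_in_closure by (auto simp: stuck_at_def)
  with \<open>y1 \<in> ?U\<close> obtain y2 where "y2 \<in> restricted_orbit p x" "y2 \<in> ?U"
    unfolding in_closure_of by (meson openin_interior_of)
  then obtain h where h: "h \<in> Sym1_ext p" "y2 = relabel h x"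
    by (auto simp: restricted_orbit_def)
  define p' where "p' = (if forth then (k, h k) # p else (Hilbert_Choice.inv h k, k) # p)"
  have p': "p' \<in> step_extensions p k forth"
    by (auto simp: p'_def step_extensions_def)
  have "h \<in> Sym1_ext p'"
    using h(1) by (auto simp: p'_def Sym1_ext_def)
  then have "locally_dense_at GG_space (restricted_orbit p' x) y2"
    using locally_dense_at_restricted_orbit[OF x orbit] h(2) by simp
  moreover have "y2 \<in> GG_space closure_of ?N"
    using \<open>y2 \<in> ?U\<close> locally_dense_at_imp_in_closure by (simp add: locally_dense_at_def)
  ultimately have "\<exists>y3\<in>?N. locally_dense_at GG_space (restricted_orbit p' x) y3"
    by (rule locally_dense_at_near_closure)
  with p' show False
    by (auto simp: stuck_at_def)
qed

lemma back_and_forth_chain: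
  assumes start: "locally_dense_at GG_space (restricted_orbit [] x) y"
    and step: "\<And>p k forth. locally_dense_at GG_space (restricted_orbit p x) y \<Longrightarrow>
      \<exists>p'\<in>step_extensions p k forth. locally_dense_at GG_space (restricted_orbit p' x) y"
  obtains ch where "\<And>n. locally_dense_at GG_space (restricted_orbit (ch n) x) y"
    "\<And>n. set (ch n) \<subseteq> set (ch (Suc n))"
    "\<And>n. \<exists>b. (n, b) \<in> set (ch (Suc n))" "\<And>n. \<exists>a. (a, n) \<in> set (ch (Suc n))"
proof -
  let ?P = "\<lambda>_ p. locally_dense_at GG_space (restricted_orbit p x) y"
  let ?Q = "\<lambda>n p p'. set p \<subseteq> set p' \<and> (\<exists>b. (n, b) \<in> set p') \<and> (\<exists>a. (a, n) \<in> set p')"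
  have next_stage: "\<exists>p'. ?P (Suc n) p' \<and> ?Q n p p'" if dense: "?P n p" for n p
  proof -
    obtain p1 where "p1 \<in> step_extensions p n True" and dense1: "?P n p1"
      using step[OF dense] by blast
    then obtain b where p1: "p1 = (n, b) # p"
      by (auto simp: step_extensions_def)
    obtain p2 where "p2 \<in> step_extensions p1 n False" and dense2: "?P n p2"
      using step[OF dense1] by blast
    then obtain a where "p2 = (a, n) # p1"
      by (auto simp: step_extensions_def)
    with p1 have "?Q n p p2"
      by auto
    with dense2 show ?thesis
      by blast
  qed
  have "\<exists>ch. \<forall>n. ?P n (ch n) \<and> ?Q n (ch n) (ch (Suc n))"
    by (rule dependent_nat_choice) (use start next_stage in blast)+
  then show ?thesis
    using that by blast
qed

lemma back_and_forth_in_orbit: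
  assumes x: "x \<in> GG" and y: "y \<in> GG"
    and start: "locally_dense_at GG_space (restricted_orbit [] x) y"
    and step: "\<And>p k forth. locally_dense_at GG_space (restricted_orbit p x) y \<Longrightarrow>
      \<exists>p'\<in>step_extensions p k forth. locally_dense_at GG_space (restricted_orbit p' x) y"
  shows "y \<in> restricted_orbit [] x"
proof -
  obtain ch where dense: "\<And>n. locally_dense_at GG_space (restricted_orbit (ch n) x) y"
    and mono: "\<And>n. set (ch n) \<subseteq> set (ch (Suc n))"
    and total: "\<And>n. \<exists>b. (n, b) \<in> set (ch (Suc n))" and onto: "\<And>n. \<exists>a. (a, n) \<in> set (ch (Suc n))"
    using back_and_forth_chain[OF start step] by blast
  have "Sym1_ext (ch n) \<noteq> {}" for n
    using locally_dense_at_imp_nonempty[OF dense[of n]] by (simp add: restricted_orbit_def)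
  then obtain g where g: "\<And>n. g \<in> Sym1_ext (ch n)"
    by (rule Sym1_ext_chain_limit[of ch, OF mono]) (use total onto in blast)+
  have g_Sym1: "g \<in> Sym1"
    using g[of 0] by (rule Sym1_ext_imp_Sym1)
  have pair: "(a, g a) \<in> set (ch n)" if "a < n" for a n
  proof -
    obtain b where ab: "(a, b) \<in> set (ch (Suc a))"
      using total by blast
    then have "g a = b"
      using g[of "Suc a"] by (auto simp: Sym1_ext_def)
    moreover have "set (ch (Suc a)) \<subseteq> set (ch n)"
      using lift_Suc_mono_le[of "\<lambda>n. set (ch n)", OF mono] that by simp
    ultimately show ?thesis
      using ab by auto
  qed
  have "relabel g x = y"
  proof (rule relabel_eqI[OF x g_Sym1])
    show "y \<in> topspace table_space"
      using y GG_subset_topspace by blast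
    fix a c assume ac: "a \<in> Npos" "c \<in> Npos"
    let ?n = "Suc (max a (max c (x (a, c))))"
    have "(a, g a) \<in> set (ch ?n)" "(c, g c) \<in> set (ch ?n)" "(x (a, c), g (x (a, c))) \<in> set (ch ?n)"
      using pair by auto
    then show "y (g a, g c) = g (x (a, c))"
      by (rule restricted_orbit_closure_apply[OF y locally_dense_at_imp_in_closure[OF dense] _ _ _ ac])
  qed
  then show ?thesis
    using g_Sym1 by (auto simp: restricted_orbit_def)
qed

text \<open>Outside the countably many nowhere dense sets \<open>far_from_orbit x\<close> and \<open>stuck_at x p k forth\<close>,
  the back-and-forth construction never gets stuck.\<close>

lemma nonmeager_orbit_comeager:
  assumes x: "x \<in> GG" and orbit: "\<not> meager_in GG_space (restricted_orbit [] x)"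
  shows "comeager_in GG_space (restricted_orbit [] x)"
proof -
  define \<F> where "\<F> = insert (far_from_orbit x) (range (\<lambda>(p, k, forth). stuck_at x p k forth))"
  have "countable \<F>"
    unfolding \<F>_def by (intro countable_insert countable_image countableI_type)
  moreover have "\<forall>N\<in>\<F>. nowhere_dense_in GG_space N"
    using nowhere_dense_far_from_orbit[OF x orbit] nowhere_dense_stuck_at[OF x orbit]
    by (auto simp: \<F>_def)
  moreover have "y \<in> \<Union>\<F>" if y: "y \<in> GG" "y \<notin> restricted_orbit [] x" for y
  proof (rule ccontr)
    assume "y \<notin> \<Union>\<F>"
    then have "y \<notin> far_from_orbit x" "\<And>p k forth. y \<notin> stuck_at x p k forth"
      by (auto simp: \<F>_def)
    then have "y \<in> restricted_orbit [] x"
      using back_and_forth_in_orbit[OF x y(1)] y(1)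
      by (simp add: far_from_orbit_def stuck_at_def)
    with y(2) show False ..
  qed
  ultimately show ?thesis
    using restricted_orbit_subset_GG[OF x]
    unfolding comeager_in_def meager_in_def topspace_GG_space by blast
qed

lemma iso_class_eq_orbit:
  assumes x: "x \<in> GG"
  shows "{A \<in> GG. group_of_table A \<cong> group_of_table x} = restricted_orbit [] x"
proof (intro equalityI subsetI)
  fix A assume "A \<in> {A \<in> GG. group_of_table A \<cong> group_of_table x}"
  then have A: "A \<in> GG" "group_of_table x \<cong> group_of_table A"
    using group.iso_sym[OF group_of_table_GG] by auto
  then obtain \<phi> where "\<phi> \<in> iso (group_of_table x) (group_of_table A)"
    by (auto simp: is_iso_def)
  then obtain g where "g \<in> Sym1" "relabel g x = A"
    using iso_imp_relabel[OF x A(1)] by blast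
  then show "A \<in> restricted_orbit [] x"
    by (auto simp: restricted_orbit_def)
next
  fix A assume "A \<in> restricted_orbit [] x"
  then obtain g where g: "g \<in> Sym1" "A = relabel g x"
    by (auto simp: restricted_orbit_def)
  then have "group_of_table x \<cong> group_of_table A"
    using relabel_iso[OF x] by (auto intro: is_isoI)
  then show "A \<in> {A \<in> GG. group_of_table A \<cong> group_of_table x}"
    using group.iso_sym[OF group_of_table_GG[OF x]] relabel_GG[OF x] g by auto
qed

theorem theorem5p6:
  fixes H :: "('a, 'b) monoid_scheme"
  assumes "group H"
  shows "meager_in GG_space {A \<in> GG. group_of_table A \<cong> H} \<or>
         comeager_in GG_space {A \<in> GG. group_of_table A \<cong> H}"
proof (cases "\<exists>x\<in>GG. group_of_table x \<cong> H")
  case False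
  then have empty: "{A \<in> GG. group_of_table A \<cong> H} = {}"
    by blast
  show ?thesis
    unfolding empty using meager_in_empty by blast
next
  case True
  then obtain x where x: "x \<in> GG" "group_of_table x \<cong> H"
    by blast
  have "H \<cong> group_of_table x"
    using group.iso_sym[OF group_of_table_GG[OF x(1)] x(2)] .
  then have "{A \<in> GG. group_of_table A \<cong> H} = {A \<in> GG. group_of_table A \<cong> group_of_table x}"
    using iso_trans[OF _ x(2)] iso_trans by blast
  also have "\<dots> = restricted_orbit [] x"
    by (rule iso_class_eq_orbit[OF x(1)])
  finally show ?thesis
    using nonmeager_orbit_comeager[OF x(1)] by auto
qed

end
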